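(* Let $\Omega \subset \mathbb{R}^2$ be a bounded, open, connected set, $f:\Omega\to[0,1]$ a given image, ${\cal A}$ a linear operator, $\mu>0$, $\lambda>0$, $K\ge 1$, and consider, for $g\in L^2(\Omega)$, constants $c_1,\dots,c_K\in\mathbb{R}$ and functions $u_1,\dots,u_K$ on $\Omega$, the energy \[ E(u_i, c_i, g) = \mu\, \Phi(f, {\cal A}g) + \lambda \sum_{i=1}^K \int_{\Omega}(g-c_i)^2 u_i\,dx + \sum_{i=1}^K \int_{\Omega} |\nabla u_i|\, dx, \] subject to $\sum_{i=1}^K u_i(x) = 1$ and $u_i(x)\in\{0,1\}$ for all $x\in\Omega$. Assume the data fidelity term $\Phi(f, {\cal A}g)$ is convex and continuous in $g$. Then for fixed $c_i$ and $u_i$ there exists one and only one $g\in L^2(\Omega)$ which minimizes $E(u_i, c_i, g)$.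
   Context: Image segmentation model coupling a restoration data fidelity term $\Phi(f,{\cal A}g)$ (e.g. $\int_\Omega (f-{\cal A}g)^2dx$ for Gaussian noise, $\int_\Omega({\cal A}g - f\log({\cal A}g))dx$ for Poisson noise, $\int_\Omega|f-{\cal A}g|dx$ for impulsive noise) with the piecewise constant Mumford-Shah segmentation fidelity $\sum_i\int_\Omega (g-c_i)^2u_i\,dx$ and total variation regularization of the indicator functions $u_i$; ${\cal A}$ is a problem-related linear operator (identity or blurring operator). *)

theory Defs
  imports "HOL-Analysis.Analysis"
begin

type_synonym R2 = "real ^ 2"

text \<open>Square-integrable functions on \<Omega> (representatives; equality in L2 is a.e. equality).\<close>
definition L2 :: "R2 set \<Rightarrow> (R2 \<Rightarrow> real) set" where
  "L2 \<Omega> = {g. g \<in> borel_measurable (lebesgue_on \<Omega>) \<and>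
                 integrable (lebesgue_on \<Omega>) (\<lambda>x. (g x)\<^sup>2)}"

definition L2_dist_sq :: "R2 set \<Rightarrow> (R2 \<Rightarrow> real) \<Rightarrow> (R2 \<Rightarrow> real) \<Rightarrow> real" where
  "L2_dist_sq \<Omega> g h = (\<integral>x. (g x - h x)\<^sup>2 \<partial>lebesgue_on \<Omega>)"

definition convex_on_L2 :: "R2 set \<Rightarrow> ((R2 \<Rightarrow> real) \<Rightarrow> real) \<Rightarrow> bool" where
  "convex_on_L2 \<Omega> F \<longleftrightarrow>
     (\<forall>g\<in>L2 \<Omega>. \<forall>h\<in>L2 \<Omega>. \<forall>t::real. 0 \<le> t \<and> t \<le> 1 \<longrightarrow>
        F (\<lambda>x. t * g x + (1 - t) * h x) \<le> t * F g + (1 - t) * F h)"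

text \<open>Continuity of a functional w.r.t. the L2(\<Omega>) norm (sequential, equivalent in a metric space).\<close>
definition continuous_on_L2 :: "R2 set \<Rightarrow> ((R2 \<Rightarrow> real) \<Rightarrow> real) \<Rightarrow> bool" where
  "continuous_on_L2 \<Omega> F \<longleftrightarrow>
     (\<forall>g\<in>L2 \<Omega>. \<forall>gs. (\<forall>n. gs n \<in> L2 \<Omega>) \<longrightarrow>
        (\<lambda>n. L2_dist_sq \<Omega> (gs n) g) \<longlonglongrightarrow> 0 \<longrightarrow> (\<lambda>n. F (gs n)) \<longlonglongrightarrow> F g)"

definition linear_on_L2 :: "R2 set \<Rightarrow> ((R2 \<Rightarrow> real) \<Rightarrow> (R2 \<Rightarrow> real)) \<Rightarrow> bool" where
  "linear_on_L2 \<Omega> A \<longleftrightarrow>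
     (\<forall>g\<in>L2 \<Omega>. \<forall>h\<in>L2 \<Omega>. \<forall>a b::real.
        A (\<lambda>x. a * g x + b * h x) = (\<lambda>x. a * A g x + b * A h x))"

definition div_field :: "(R2 \<Rightarrow> R2 \<Rightarrow> R2) \<Rightarrow> R2 \<Rightarrow> real" where
  "div_field D x = (\<Sum>i\<in>Basis. D x i \<bullet> i)"

text \<open>Admissible test fields: C^1, compactly supported in \<Omega>, pointwise norm at most 1.
  (phi, D) where D is the (continuous) derivative of phi.\<close>
definition test_fields :: "R2 set \<Rightarrow> ((R2 \<Rightarrow> R2) \<times> (R2 \<Rightarrow> R2 \<Rightarrow> R2)) set" where
  "test_fields \<Omega> = {(\<phi>, D). (\<forall>x. (\<phi> has_derivative D x) (at x)) \<and>
                       (\<forall>v. continuous_on UNIV (\<lambda>x. D x v)) \<and>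
                       (\<exists>K. compact K \<and> K \<subseteq> \<Omega> \<and> (\<forall>x. x \<notin> K \<longrightarrow> \<phi> x = 0)) \<and>
                       (\<forall>x. norm (\<phi> x) \<le> 1)}"

text \<open>Total variation \<integral>_\<Omega> |\<nabla>u| (distributional, dual formulation).\<close>
definition TV :: "R2 set \<Rightarrow> (R2 \<Rightarrow> real) \<Rightarrow> ereal" where
  "TV \<Omega> u = (SUP p \<in> test_fields \<Omega>.
               ereal (\<integral>x. u x * div_field (snd p) x \<partial>lebesgue_on \<Omega>))"

definition energy ::
  "R2 set \<Rightarrow> real \<Rightarrow> real \<Rightarrow> nat \<Rightarrow> ((R2 \<Rightarrow> real) \<Rightarrow> (R2 \<Rightarrow> real) \<Rightarrow> real) \<Rightarrow>
   (R2 \<Rightarrow> real) \<Rightarrow> ((R2 \<Rightarrow> real) \<Rightarrow> (R2 \<Rightarrow> real)) \<Rightarrow>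
   (nat \<Rightarrow> R2 \<Rightarrow> real) \<Rightarrow> (nat \<Rightarrow> real) \<Rightarrow> (R2 \<Rightarrow> real) \<Rightarrow> ereal" where
  "energy \<Omega> \<mu> lam K \<Phi> f A u c g =
     ereal (\<mu> * \<Phi> f (A g)
            + lam * (\<Sum>i=1..K. \<integral>x. (g x - c i)\<^sup>2 * u i x \<partial>lebesgue_on \<Omega>))
     + (\<Sum>i=1..K. TV \<Omega> (u i))"

end

theory Submission
  imports Defs
begin

text \<open>
  For fixed \<open>u\<^sub>i\<close> and \<open>c\<^sub>i\<close> the indicator functions form a partition, so the segmentation
  fidelity equals \<open>\<lambda> \<parallel>g - z\<parallel>\<^sup>2\<close> with the piecewise constant image \<open>z = \<Sum> c\<^sub>i u\<^sub>i\<close>, and the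
  total variation term is a finite constant. It remains to minimise
  \<open>J g = G g + \<lambda> \<parallel>g - z\<parallel>\<^sup>2\<close> over \<open>L\<^sup>2(\<Omega>)\<close>, where \<open>G = \<mu> \<Phi>(f, A \<cdot>)\<close> is convex and continuous.
  The parallelogram law makes \<open>J\<close> strongly convex:
  \<open>J ((a + b) / 2) \<le> (J a + J b) / 2 - \<lambda>/4 \<parallel>a - b\<parallel>\<^sup>2\<close>.
  Continuity of \<open>G\<close> at \<open>z\<close> together with convexity bounds \<open>G\<close> below by
  \<open>G z - 1 - C \<parallel>g - z\<parallel>\<close>, which the quadratic penalty dominates, so \<open>J\<close> is bounded below.
  By strong convexity every minimising sequence is Cauchy; its limit in \<open>L\<^sup>2\<close>
  (Riesz--Fischer, via an a.e.\ convergent subsequence and Fatou's lemma) is a minimiser,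
  and strong convexity again shows that two minimisers agree almost everywhere.
\<close>

section \<open>Square-integrable functions\<close>

definition square_integrable :: "'a measure \<Rightarrow> ('a \<Rightarrow> real) set" where
  "square_integrable M = {g. g \<in> borel_measurable M \<and> integrable M (\<lambda>x. (g x)\<^sup>2)}"

abbreviation sqdist :: "'a measure \<Rightarrow> ('a \<Rightarrow> real) \<Rightarrow> ('a \<Rightarrow> real) \<Rightarrow> real" where
  "sqdist M g h \<equiv> \<integral>x. (g x - h x)\<^sup>2 \<partial>M"

lemma square_integrableD [measurable_dest]:
  "g \<in> square_integrable M \<Longrightarrow> g \<in> borel_measurable M"
  by (simp add: square_integrable_def)

lemma sqdist_nonneg: "0 \<le> sqdist M g h"
  by simp

lemma sqdist_commute: "sqdist M g h = sqdist M h g"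
  by (simp add: power2_commute)

lemma integrable_mult_square_integrable:
  assumes "g \<in> square_integrable M" "h \<in> square_integrable M"
  shows "integrable M (\<lambda>x. g x * h x)"
proof (rule Bochner_Integration.integrable_bound[of _ "\<lambda>x. (g x)\<^sup>2 + (h x)\<^sup>2"])
  show "integrable M (\<lambda>x. (g x)\<^sup>2 + (h x)\<^sup>2)"
    using assms by (simp add: square_integrable_def)
  show "(\<lambda>x. g x * h x) \<in> borel_measurable M"
    using assms by measurable
  have "\<bar>g x * h x\<bar> \<le> (g x)\<^sup>2 + (h x)\<^sup>2" for x
  proof -
    have "2 * \<bar>g x\<bar> * \<bar>h x\<bar> \<le> \<bar>g x\<bar>\<^sup>2 + \<bar>h x\<bar>\<^sup>2" by (rule sum_squares_bound)
    moreover have "0 \<le> \<bar>g x\<bar> * \<bar>h x\<bar>" by simp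
    ultimately show ?thesis by (simp only: abs_mult power2_abs)
  qed
  then show "AE x in M. norm (g x * h x) \<le> norm ((g x)\<^sup>2 + (h x)\<^sup>2)"
    by simp
qed

lemma square_integrable_lincomb:
  assumes "g \<in> square_integrable M" "h \<in> square_integrable M"
  shows "(\<lambda>x. a * g x + b * h x) \<in> square_integrable M"
proof -
  have [measurable]: "g \<in> borel_measurable M" "h \<in> borel_measurable M"
    using assms by (simp_all add: square_integrable_def)
  have "(\<lambda>x. (a * g x + b * h x)\<^sup>2) = (\<lambda>x. a\<^sup>2 * (g x)\<^sup>2 + 2*a*b * (g x * h x) + b\<^sup>2 * (h x)\<^sup>2)"
    by (auto simp: power2_eq_square algebra_simps)
  moreover have "integrable M (\<lambda>x. a\<^sup>2 * (g x)\<^sup>2 + 2*a*b * (g x * h x) + b\<^sup>2 * (h x)\<^sup>2)"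
    using assms integrable_mult_square_integrable[OF assms] by (auto simp: square_integrable_def)
  ultimately show ?thesis
    by (simp add: square_integrable_def)
qed

lemma square_integrable_mult_left:
  "g \<in> square_integrable M \<Longrightarrow> (\<lambda>x. a * g x) \<in> square_integrable M"
  using square_integrable_lincomb[of g M g a 0] by simp

lemma square_integrable_diff:
  "g \<in> square_integrable M \<Longrightarrow> h \<in> square_integrable M \<Longrightarrow> (\<lambda>x. g x - h x) \<in> square_integrable M"
  using square_integrable_lincomb[of g M h 1 "-1"] by simp

lemma integrable_sqdist:
  "g \<in> square_integrable M \<Longrightarrow> h \<in> square_integrable M \<Longrightarrow> integrable M (\<lambda>x. (g x - h x)\<^sup>2)"
  using square_integrable_diff by (auto simp: square_integrable_def)

lemma sqdist_eq_0_iff_AE: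
  "g \<in> square_integrable M \<Longrightarrow> h \<in> square_integrable M \<Longrightarrow> sqdist M g h = 0 \<longleftrightarrow> (AE x in M. g x = h x)"
  by (simp add: integral_nonneg_eq_0_iff_AE integrable_sqdist)

context finite_measure
begin

lemma square_integrable_const: "(\<lambda>x. c) \<in> square_integrable M"
  by (simp add: square_integrable_def)

lemma integrable_of_square_integrable: "g \<in> square_integrable M \<Longrightarrow> integrable M g"
  by (rule square_integrable_imp_integrable) (auto simp: square_integrable_def)

lemma Fatou_integral_le:
  fixes f :: "nat \<Rightarrow> 'a \<Rightarrow> real"
  assumes [measurable]: "\<And>n. f n \<in> borel_measurable M" "F \<in> borel_measurable M"
    and nonneg: "\<And>n x. 0 \<le> f n x"
    and lim: "AE x in M. (\<lambda>n. f n x) \<longlonglongrightarrow> F x"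
    and int: "\<And>n. integrable M (f n)"
    and bound: "eventually (\<lambda>n. integral\<^sup>L M (f n) \<le> B) sequentially"
  shows "integrable M F \<and> integral\<^sup>L M F \<le> B"
proof -
  have F_nonneg: "AE x in M. 0 \<le> F x"
    using lim by eventually_elim (rule LIMSEQ_le_const, auto simp: nonneg)
  have B_nonneg: "0 \<le> B"
    using bound integral_nonneg_AE[of "f _" M] nonneg
    by (metis (no_types, lifting) AE_I2 eventually_sequentially order.trans order_refl)
  have "(\<integral>\<^sup>+x. ennreal (F x) \<partial>M) = (\<integral>\<^sup>+x. liminf (\<lambda>n. ennreal (f n x)) \<partial>M)"
    using lim by (intro nn_integral_cong_AE, eventually_elim)
      (simp add: lim_imp_Liminf[OF _ tendsto_ennrealI])
  also have "\<dots> \<le> liminf (\<lambda>n. \<integral>\<^sup>+x. ennreal (f n x) \<partial>M)"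
    by (rule nn_integral_liminf) measurable
  also have "\<dots> = liminf (\<lambda>n. ennreal (integral\<^sup>L M (f n)))"
    by (simp add: nn_integral_eq_integral[OF int] nonneg)
  also have "\<dots> \<le> limsup (\<lambda>n. ennreal (integral\<^sup>L M (f n)))"
    by (rule Liminf_le_Limsup) simp
  also have "\<dots> \<le> ennreal B"
    using bound by (intro Limsup_bounded) (auto elim: eventually_mono intro: ennreal_leI)
  finally have le: "(\<integral>\<^sup>+x. ennreal (F x) \<partial>M) \<le> ennreal B" .
  then have "integrable M F"
    using F_nonneg le_less_trans[OF le ennreal_less_top] by (intro integrableI_nonneg) auto
  moreover have "integral\<^sup>L M F \<le> B"
    using enn2real_mono[OF le] B_nonneg F_nonneg by (simp add: integral_eq_nn_integral)
  ultimately show ?thesis ..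
qed

lemma sqdist_le_of_AE_tendsto:
  assumes f: "\<And>n. f n \<in> square_integrable M" and z: "z \<in> square_integrable M"
    and [measurable]: "g \<in> borel_measurable M"
    and lim: "AE x in M. (\<lambda>n. f n x) \<longlonglongrightarrow> g x"
    and bound: "eventually (\<lambda>n. sqdist M (f n) z \<le> B) sequentially"
  shows "integrable M (\<lambda>x. (g x - z x)\<^sup>2) \<and> sqdist M g z \<le> B"
proof (rule Fatou_integral_le[where f = "\<lambda>n x. (f n x - z x)\<^sup>2"])
  show "AE x in M. (\<lambda>n. (f n x - z x)\<^sup>2) \<longlonglongrightarrow> (g x - z x)\<^sup>2"
    using lim by eventually_elim (intro tendsto_intros)
  show "\<And>n. integrable M (\<lambda>x. (f n x - z x)\<^sup>2)"
    using f z by (rule integrable_sqdist)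
  show "\<And>n. (\<lambda>x. (f n x - z x)\<^sup>2) \<in> borel_measurable M"
    using f z by measurable
  show "(\<lambda>x. (g x - z x)\<^sup>2) \<in> borel_measurable M"
    using z by measurable
  show "eventually (\<lambda>n. integral\<^sup>L M (\<lambda>x. (f n x - z x)\<^sup>2) \<le> B) sequentially"
    by (fact bound)
qed simp

lemma integral_abs_le_sqdist:
  assumes "g \<in> square_integrable M" "h \<in> square_integrable M" and "e > 0"
  shows "(LINT x|M. \<bar>g x - h x\<bar>) \<le> sqdist M g h / (2 * e) + e / 2 * measure M (space M)"
proof -
  \<comment> \<open>pointwise AM-GM: \<open>\<bar>d\<bar> \<le> d\<^sup>2 / (2e) + e / 2\<close>\<close>
  have "(LINT x|M. \<bar>g x - h x\<bar>) \<le> (\<integral>x. (g x - h x)\<^sup>2 / (2 * e) + e / 2 \<partial>M)"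
  proof (rule integral_mono)
    show "integrable M (\<lambda>x. \<bar>g x - h x\<bar>)"
      by (intro integrable_abs integrable_of_square_integrable square_integrable_diff assms)
    show "integrable M (\<lambda>x. (g x - h x)\<^sup>2 / (2 * e) + e / 2)"
      using integrable_sqdist[OF assms(1,2)] by simp
    fix x
    have "2 * \<bar>g x - h x\<bar> * e \<le> \<bar>g x - h x\<bar>\<^sup>2 + e\<^sup>2" by (rule sum_squares_bound)
    then show "\<bar>g x - h x\<bar> \<le> (g x - h x)\<^sup>2 / (2 * e) + e / 2"
      using \<open>e > 0\<close> by (simp add: field_simps power2_eq_square)
  qed
  also have "\<dots> = sqdist M g h / (2 * e) + e / 2 * measure M (space M)"
    using integrable_sqdist[OF assms(1,2)] by simp
  finally show ?thesis .
qed

lemma L1_Cauchy_of_sqdist_Cauchy: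
  assumes s: "\<And>n. s n \<in> square_integrable M"
    and Cauchy: "\<And>e. e > 0 \<Longrightarrow> \<exists>N. \<forall>i\<ge>N. \<forall>j\<ge>N. sqdist M (s i) (s j) < e"
    and "e > 0"
  shows "\<exists>N. \<forall>i\<ge>N. \<forall>j\<ge>N. (LINT x|M. norm (s i x - s j x)) < e"
proof -
  define \<delta> where "\<delta> = e / (measure M (space M) + 1)"
  have "\<delta> > 0"
    using \<open>e > 0\<close> by (simp add: \<delta>_def add_nonneg_pos)
  then obtain N where N: "\<forall>i\<ge>N. \<forall>j\<ge>N. sqdist M (s i) (s j) < e * \<delta>"
    using Cauchy[of "e * \<delta>"] \<open>e > 0\<close> by auto
  have "0 < measure M (space M) + 1"
    by (simp add: add_nonneg_pos)
  then have "\<delta> / 2 * measure M (space M) < e / 2"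
    using \<open>e > 0\<close> by (simp add: \<delta>_def field_simps)
  have "(LINT x|M. \<bar>s i x - s j x\<bar>) < e" if "i \<ge> N" "j \<ge> N" for i j
  proof -
    have "sqdist M (s i) (s j) / (2 * \<delta>) < e / 2"
      using N that \<open>\<delta> > 0\<close> by (simp add: field_simps)
    with \<open>\<delta> / 2 * _ < e / 2\<close> show ?thesis
      using integral_abs_le_sqdist[OF s s \<open>\<delta> > 0\<close>, of i j] by linarith
  qed
  then show ?thesis by auto
qed

theorem square_integrable_complete:
  assumes s: "\<And>n. s n \<in> square_integrable M"
    and Cauchy: "\<And>e. e > 0 \<Longrightarrow> \<exists>N. \<forall>i\<ge>N. \<forall>j\<ge>N. sqdist M (s i) (s j) < e"
  obtains g r where "g \<in> square_integrable M" "strict_mono r"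
    "AE x in M. (\<lambda>n. s (r n) x) \<longlonglongrightarrow> g x" "(\<lambda>n. sqdist M (s n) g) \<longlonglongrightarrow> 0"
proof -
  have "\<And>n. integrable M (s n)"
    using s integrable_of_square_integrable by blast
  then obtain r where r: "strict_mono r" and "AE x in M. Cauchy (\<lambda>n. s (r n) x)"
    using cauchy_L1_AE_cauchy_subseq L1_Cauchy_of_sqdist_Cauchy[OF s Cauchy] by blast
  define g where "g x = lim (\<lambda>n. s (r n) x)" for x
  have g_measurable [measurable]: "g \<in> borel_measurable M"
    using s unfolding g_def by measurable
  have lim: "AE x in M. (\<lambda>n. s (r n) x) \<longlonglongrightarrow> g x"
    using \<open>AE x in M. Cauchy _\<close>
    by eventually_elim (simp add: g_def Cauchy_convergent_iff convergent_LIMSEQ_iff)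
  have tail: "integrable M (\<lambda>x. (g x - s k x)\<^sup>2) \<and> sqdist M g (s k) \<le> e"
    if N: "\<forall>i\<ge>N. \<forall>j\<ge>N. sqdist M (s i) (s j) < e" and "k \<ge> N" for e N k
  proof (rule sqdist_le_of_AE_tendsto[OF _ s g_measurable])
    show "AE x in M. (\<lambda>n. s (r n) x) \<longlonglongrightarrow> g x" by (fact lim)
    show "eventually (\<lambda>n. sqdist M (s (r n)) (s k) \<le> e) sequentially"
    proof (rule eventually_sequentiallyI)
      fix n assume "n \<ge> N"
      then have "r n \<ge> N" using seq_suble[OF r, of n] by linarith
      then show "sqdist M (s (r n)) (s k) \<le> e" using N \<open>k \<ge> N\<close> by fastforce
    qed
  qed (fact s)
  obtain N where "\<forall>i\<ge>N. \<forall>j\<ge>N. sqdist M (s i) (s j) < 1"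
    using Cauchy[of 1] by auto
  moreover have "(\<lambda>x. g x - s N x) \<in> borel_measurable M"
    using s by measurable
  ultimately have "(\<lambda>x. g x - s N x) \<in> square_integrable M"
    using tail[of N 1 N] by (simp add: square_integrable_def)
  from square_integrable_lincomb[OF this s, of 1 1 N] have "g \<in> square_integrable M"
    by simp
  moreover have "(\<lambda>n. sqdist M (s n) g) \<longlonglongrightarrow> 0"
  proof (rule LIMSEQ_I)
    fix e :: real assume "e > 0"
    then obtain N where N: "\<forall>i\<ge>N. \<forall>j\<ge>N. sqdist M (s i) (s j) < e / 2"
      using Cauchy[of "e / 2"] by auto
    have "norm (sqdist M (s n) g - 0) < e" if "n \<ge> N" for n
      using tail[OF N that] \<open>e > 0\<close> by (simp add: sqdist_commute)
    then show "\<exists>N. \<forall>n\<ge>N. norm (sqdist M (s n) g - 0) < e" by blast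
  qed
  ultimately show ?thesis
    using that r lim by blast
qed

end

lemma sqdist_midpoint:
  assumes "a \<in> square_integrable M" "b \<in> square_integrable M" "z \<in> square_integrable M"
  shows "sqdist M (\<lambda>x. (a x + b x) / 2) z = sqdist M a z / 2 + sqdist M b z / 2 - sqdist M a b / 4"
proof -
  have "((a x + b x) / 2 - z x)\<^sup>2 = (a x - z x)\<^sup>2 / 2 + (b x - z x)\<^sup>2 / 2 - (a x - b x)\<^sup>2 / 4" for x
    by (simp add: power2_eq_square field_simps)
  then show ?thesis
    using integrable_sqdist[OF assms(1,3)] integrable_sqdist[OF assms(2,3)]
      integrable_sqdist[OF assms(1,2)] by simp
qed

section \<open>Minimising a convex functional plus a quadratic penalty\<close>

locale penalized_convex_functional = finite_measure M for M :: "'a measure" +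
  fixes G :: "('a \<Rightarrow> real) \<Rightarrow> real" and z :: "'a \<Rightarrow> real" and lam :: real
  assumes lam_pos: "lam > 0"
    and z_square_integrable: "z \<in> square_integrable M"
    and G_convex: "\<And>g h t. g \<in> square_integrable M \<Longrightarrow> h \<in> square_integrable M \<Longrightarrow>
      0 \<le> t \<Longrightarrow> t \<le> 1 \<Longrightarrow> G (\<lambda>x. t * g x + (1 - t) * h x) \<le> t * G g + (1 - t) * G h"
    and G_continuous: "\<And>g gs. g \<in> square_integrable M \<Longrightarrow> (\<And>n. gs n \<in> square_integrable M) \<Longrightarrow>
      (\<lambda>n. sqdist M (gs n) g) \<longlonglongrightarrow> 0 \<Longrightarrow> (\<lambda>n. G (gs n)) \<longlonglongrightarrow> G g"
begin

definition J :: "('a \<Rightarrow> real) \<Rightarrow> real" where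
  "J h = G h + lam * sqdist M h z"

lemma J_midpoint_le:
  assumes "a \<in> square_integrable M" "b \<in> square_integrable M"
  shows "J (\<lambda>x. (a x + b x) / 2) \<le> (J a + J b) / 2 - lam / 4 * sqdist M a b"
proof -
  have "G (\<lambda>x. (a x + b x) / 2) = G (\<lambda>x. 1/2 * a x + (1 - 1/2) * b x)"
    by (simp add: add_divide_distrib)
  also have "\<dots> \<le> (G a + G b) / 2"
    using G_convex[OF assms, of "1/2"] by simp
  finally show ?thesis
    by (simp add: J_def sqdist_midpoint[OF assms z_square_integrable] algebra_simps)
qed

lemma G_bounded_below_near_z:
  obtains r where "r > 0" "\<And>h. h \<in> square_integrable M \<Longrightarrow> sqdist M h z \<le> r \<Longrightarrow> G z - 1 \<le> G h"
proof -
  have "\<exists>r>0. \<forall>h\<in>square_integrable M. sqdist M h z \<le> r \<longrightarrow> G z - 1 \<le> G h"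
  proof (rule ccontr)
    assume "\<not> ?thesis"
    then have no_bound: "\<forall>r>0. \<exists>h\<in>square_integrable M. sqdist M h z \<le> r \<and> G h < G z - 1"
      by (auto simp: not_le)
    have "\<forall>n. \<exists>h. h \<in> square_integrable M \<and> sqdist M h z \<le> 1 / Suc n \<and> G h < G z - 1"
    proof
      fix n :: nat
      have "1 / real (Suc n) > 0" by simp
      from no_bound[rule_format, OF this]
      show "\<exists>h. h \<in> square_integrable M \<and> sqdist M h z \<le> 1 / Suc n \<and> G h < G z - 1"
        by blast
    qed
    then obtain hs where
      "\<forall>n. hs n \<in> square_integrable M \<and> sqdist M (hs n) z \<le> 1 / Suc n \<and> G (hs n) < G z - 1"
      by (rule choice[THEN exE])
    then have hs: "\<And>n. hs n \<in> square_integrable M"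
      "\<And>n. sqdist M (hs n) z \<le> 1 / Suc n" "\<And>n. G (hs n) < G z - 1"
      by simp_all
    have "(\<lambda>n. 1 / real (Suc n)) \<longlonglongrightarrow> 0"
      using LIMSEQ_inverse_real_of_nat by (simp add: inverse_eq_divide)
    with hs(2) have "(\<lambda>n. sqdist M (hs n) z) \<longlonglongrightarrow> 0"
      by (auto intro: real_tendsto_sandwich[of "\<lambda>n. 0" _ _ "\<lambda>n. 1 / Suc n"])
    then have "(\<lambda>n. G (hs n)) \<longlonglongrightarrow> G z"
      using G_continuous[of z hs] z_square_integrable hs(1) by blast
    moreover have "\<forall>n\<ge>0. G (hs n) \<le> G z - 1"
      using hs(3) less_imp_le by blast
    ultimately have "G z \<le> G z - 1"
      by (intro LIMSEQ_le_const2) blast+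
    then show False by simp
  qed
  then show ?thesis using that by blast
qed

lemma G_lower_bound:
  obtains r where "r > 0" "\<And>h. h \<in> square_integrable M \<Longrightarrow> G z - 1 - sqrt (sqdist M h z / r) \<le> G h"
proof -
  obtain r where "r > 0" and near: "\<And>h. h \<in> square_integrable M \<Longrightarrow> sqdist M h z \<le> r \<Longrightarrow> G z - 1 \<le> G h"
    using G_bounded_below_near_z by blast
  have "G z - 1 - sqrt (sqdist M h z / r) \<le> G h" if h: "h \<in> square_integrable M" for h
  proof (cases "sqdist M h z \<le> r")
    case True
    moreover have "0 \<le> sqrt (sqdist M h z / r)"
      using \<open>r > 0\<close> by simp
    ultimately show ?thesis
      using near[OF h] by linarith
  next
    case False
    \<comment> \<open>move from \<open>z\<close> towards \<open>h\<close> until the distance is exactly \<open>r\<close>, then use convexity\<close>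
    define t where "t = sqrt (r / sqdist M h z)"
    have "0 < t" "t \<le> 1" "t\<^sup>2 = r / sqdist M h z"
      using False \<open>r > 0\<close> by (simp_all add: t_def)
    define p where "p x = t * h x + (1 - t) * z x" for x
    have p: "p \<in> square_integrable M"
      unfolding p_def by (intro square_integrable_lincomb h z_square_integrable)
    have "(p x - z x)\<^sup>2 = t\<^sup>2 * (h x - z x)\<^sup>2" for x
      by (simp add: p_def power2_eq_square algebra_simps)
    then have "sqdist M p z = t\<^sup>2 * sqdist M h z"
      by simp
    also have "\<dots> = r"
      using \<open>t\<^sup>2 = _\<close> False \<open>r > 0\<close> by simp
    finally have "G z - 1 \<le> G p"
      using near[OF p] by simp
    also have "G p \<le> t * G h + (1 - t) * G z"
      unfolding p_def using G_convex[OF h z_square_integrable] \<open>0 < t\<close> \<open>t \<le> 1\<close> by simp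
    finally have "G z - 1 / t \<le> G h"
      using \<open>0 < t\<close> by (simp add: field_simps)
    moreover have "1 / t = sqrt (sqdist M h z / r)"
      using False \<open>r > 0\<close> by (simp add: t_def real_sqrt_divide)
    moreover have "0 \<le> sqrt (sqdist M h z / r)"
      using \<open>r > 0\<close> by simp
    ultimately show ?thesis by linarith
  qed
  with \<open>r > 0\<close> show ?thesis using that by blast
qed

lemma J_bounded_below: "bdd_below (J ` square_integrable M)"
proof -
  obtain r where "r > 0" and G_low: "\<And>h. h \<in> square_integrable M \<Longrightarrow> G z - 1 - sqrt (sqdist M h z / r) \<le> G h"
    using G_lower_bound by blast
  define k where "k = 1 / (2 * r * lam)"
  have "k > 0" using \<open>r > 0\<close> lam_pos by (simp add: k_def)
  have "G z - 1 - k / 2 \<le> J h" if h: "h \<in> square_integrable M" for h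
  proof -
    define y where "y = sqdist M h z / r"
    have "0 \<le> y" using \<open>r > 0\<close> by (simp add: y_def)
    \<comment> \<open>the quadratic penalty beats the square-root loss: \<open>\<surd>y \<le> y / (2k) + k / 2\<close>\<close>
    have "2 * k * sqrt y \<le> y + k\<^sup>2"
      using sum_squares_bound[of "sqrt y" k] \<open>0 \<le> y\<close> by (simp add: algebra_simps)
    then have "sqrt y \<le> y / (2 * k) + k / 2"
      using \<open>k > 0\<close> by (simp add: field_simps power2_eq_square)
    also have "y / (2 * k) = lam * sqdist M h z"
      using \<open>r > 0\<close> lam_pos by (simp add: y_def k_def field_simps)
    finally show ?thesis
      using G_low[OF h] by (simp add: J_def y_def)
  qed
  then show ?thesis by (rule bdd_belowI2)
qed

lemma minimizing_sequence_Cauchy: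
  assumes gs: "\<And>n. gs n \<in> square_integrable M"
    and lim: "(\<lambda>n. J (gs n)) \<longlonglongrightarrow> Inf (J ` square_integrable M)"
    and "e > 0"
  shows "\<exists>N. \<forall>i\<ge>N. \<forall>j\<ge>N. sqdist M (gs i) (gs j) < e"
proof -
  let ?m = "Inf (J ` square_integrable M)"
  have m_le: "?m \<le> J h" if "h \<in> square_integrable M" for h
    using J_bounded_below that by (simp add: cInf_lower)
  \<comment> \<open>strong convexity: the midpoint of two near-minimizers is a competitor\<close>
  have dist_le: "sqdist M a b \<le> 2 / lam * (J a + J b - 2 * ?m)"
    if "a \<in> square_integrable M" "b \<in> square_integrable M" for a b
  proof -
    have "(\<lambda>x. (a x + b x) / 2) \<in> square_integrable M"
      using square_integrable_lincomb[OF that, of "1/2" "1/2"] by (simp add: add_divide_distrib)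
    then have "?m \<le> (J a + J b) / 2 - lam / 4 * sqdist M a b"
      using m_le J_midpoint_le[OF that] order_trans by blast
    then show ?thesis
      using lam_pos by (simp add: field_simps)
  qed
  obtain N where N: "\<And>n. n \<ge> N \<Longrightarrow> \<bar>J (gs n) - ?m\<bar> < lam * e / 8"
    using LIMSEQ_D[OF lim, of "lam * e / 8"] lam_pos \<open>e > 0\<close> by auto
  have "sqdist M (gs i) (gs j) < e" if "i \<ge> N" "j \<ge> N" for i j
  proof -
    have "J (gs i) + J (gs j) - 2 * ?m < lam * e / 4"
      using N[OF \<open>i \<ge> N\<close>] N[OF \<open>j \<ge> N\<close>] by linarith
    then have "2 / lam * (J (gs i) + J (gs j) - 2 * ?m) < e / 2"
      using lam_pos by (simp add: field_simps)
    then show ?thesis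
      using dist_le[OF gs gs, of i j] \<open>e > 0\<close> by linarith
  qed
  then show ?thesis by blast
qed

lemma J_le_of_tendsto:
  assumes gs: "\<And>n. gs n \<in> square_integrable M" and g: "g \<in> square_integrable M"
    and "strict_mono \<sigma>" and AE_lim: "AE x in M. (\<lambda>n. gs (\<sigma> n) x) \<longlonglongrightarrow> g x"
    and L2_lim: "(\<lambda>n. sqdist M (gs n) g) \<longlonglongrightarrow> 0"
    and J_lim: "(\<lambda>n. J (gs n)) \<longlonglongrightarrow> m"
  shows "J g \<le> m"
proof -
  have "(\<lambda>n. G (gs n)) \<longlonglongrightarrow> G g"
    using G_continuous[of g gs] g gs L2_lim by blast
  then have "(\<lambda>n. (J (gs n) - G (gs n)) / lam) \<longlonglongrightarrow> (m - G g) / lam"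
    using lam_pos by (intro tendsto_intros J_lim) auto
  then have "(\<lambda>n. sqdist M (gs n) z) \<longlonglongrightarrow> (m - G g) / lam"
    using lam_pos by (simp add: J_def)
  then have sub_lim: "(\<lambda>n. sqdist M (gs (\<sigma> n)) z) \<longlonglongrightarrow> (m - G g) / lam"
    using LIMSEQ_subseq_LIMSEQ[OF _ \<open>strict_mono \<sigma>\<close>] by (simp add: comp_def)
  have "sqdist M g z \<le> (m - G g) / lam + \<epsilon>" if "\<epsilon> > 0" for \<epsilon>
  proof (rule sqdist_le_of_AE_tendsto[THEN conjunct2, OF gs z_square_integrable _ AE_lim])
    show "g \<in> borel_measurable M" using g by (simp add: square_integrable_def)
    show "eventually (\<lambda>n. sqdist M (gs (\<sigma> n)) z \<le> (m - G g) / lam + \<epsilon>) sequentially"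
      using order_tendstoD(2)[OF sub_lim, of "(m - G g) / lam + \<epsilon>"] \<open>\<epsilon> > 0\<close>
      by (auto elim: eventually_mono)
  qed
  then have "sqdist M g z \<le> (m - G g) / lam"
    by (rule field_le_epsilon)
  then show ?thesis
    using lam_pos by (simp add: J_def field_simps)
qed

theorem J_has_minimizer:
  obtains g where "g \<in> square_integrable M" "\<And>h. h \<in> square_integrable M \<Longrightarrow> J g \<le> J h"
proof -
  let ?m = "Inf (J ` square_integrable M)"
  have "J ` square_integrable M \<noteq> {}"
    using z_square_integrable by blast
  then obtain ys where ys: "\<forall>n. ys n \<in> J ` square_integrable M" "ys \<longlonglongrightarrow> ?m"
    using closure_contains_Inf[OF _ J_bounded_below] unfolding closure_sequential by blast
  from ys(1) have "\<forall>n. \<exists>h. h \<in> square_integrable M \<and> ys n = J h"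
    by blast
  then obtain gs where "\<forall>n. gs n \<in> square_integrable M \<and> ys n = J (gs n)"
    by (rule choice[THEN exE])
  then have gs: "\<And>n. gs n \<in> square_integrable M" and "ys = (\<lambda>n. J (gs n))"
    by auto
  with ys(2) have J_lim: "(\<lambda>n. J (gs n)) \<longlonglongrightarrow> ?m"
    by simp
  obtain g \<sigma> where g: "g \<in> square_integrable M" "strict_mono \<sigma>"
      "AE x in M. (\<lambda>n. gs (\<sigma> n) x) \<longlonglongrightarrow> g x" "(\<lambda>n. sqdist M (gs n) g) \<longlonglongrightarrow> 0"
    using square_integrable_complete[OF gs minimizing_sequence_Cauchy[OF gs J_lim]] by blast
  have "J g \<le> ?m"
    using J_le_of_tendsto[OF gs g J_lim] .
  then have "J g \<le> J h" if "h \<in> square_integrable M" for h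
    using J_bounded_below that by (meson cInf_lower image_eqI order_trans)
  with g(1) show ?thesis using that by blast
qed

lemma J_minimizer_unique:
  assumes g: "g \<in> square_integrable M" "\<And>h. h \<in> square_integrable M \<Longrightarrow> J g \<le> J h"
    and g': "g' \<in> square_integrable M" "\<And>h. h \<in> square_integrable M \<Longrightarrow> J g' \<le> J h"
  shows "AE x in M. g' x = g x"
proof -
  have "(\<lambda>x. (g' x + g x) / 2) \<in> square_integrable M"
    using square_integrable_lincomb[OF g'(1) g(1), of "1/2" "1/2"] by (simp add: add_divide_distrib)
  then have "J g \<le> (J g' + J g) / 2 - lam / 4 * sqdist M g' g"
    using g(2) J_midpoint_le[OF g'(1) g(1)] order_trans by blast
  moreover have "J g' \<le> J g"
    using g'(2) g(1) by blast
  ultimately have "lam * sqdist M g' g \<le> 0"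
    by (simp add: field_simps)
  then have "sqdist M g' g \<le> 0"
    using lam_pos by (simp add: mult_le_0_iff)
  then have "sqdist M g' g = 0"
    using sqdist_nonneg[of M g' g] by linarith
  then show ?thesis
    using sqdist_eq_0_iff_AE[OF g'(1) g(1)] by blast
qed

end

section \<open>The segmentation energy\<close>

lemma sum_zero_one_partition:
  fixes u :: "'i \<Rightarrow> real"
  assumes "finite I" and zero_one: "\<forall>i\<in>I. u i \<in> {0, 1}" and sum_one: "(\<Sum>i\<in>I. u i) = 1"
  obtains j where "j \<in> I" "\<And>w :: 'i \<Rightarrow> real. (\<Sum>i\<in>I. w i * u i) = w j"
proof -
  obtain j where "j \<in> I" "u j \<noteq> 0"
    using sum_one by (metis sum.neutral zero_neq_one)
  then have "u j = 1"
    using zero_one by auto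
  then have "(\<Sum>i\<in>I - {j}. u i) = 0"
    using sum_one \<open>finite I\<close> \<open>j \<in> I\<close> by (simp add: sum.remove)
  then have others: "\<forall>i\<in>I - {j}. u i = 0"
    using \<open>finite I\<close> zero_one by (subst (asm) sum_nonneg_eq_0_iff) auto
  have "(\<Sum>i\<in>I. w i * u i) = w j" for w :: "'i \<Rightarrow> real"
    using \<open>finite I\<close> \<open>j \<in> I\<close> \<open>u j = 1\<close> others by (simp add: sum.remove)
  with \<open>j \<in> I\<close> show ?thesis using that by blast
qed

context finite_measure
begin

lemma square_integrable_zero_one:
  assumes "u \<in> borel_measurable M" "\<forall>x\<in>space M. u x \<in> {0, 1}"
  shows "u \<in> square_integrable M"
proof -
  have "integrable M (\<lambda>x. (u x)\<^sup>2)"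
    by (rule Bochner_Integration.integrable_bound[of _ "\<lambda>x. 1 :: real"]) (use assms in \<open>auto intro!: AE_I2\<close>)
  with assms(1) show ?thesis
    by (simp add: square_integrable_def)
qed

lemma square_integrable_sum:
  "finite I \<Longrightarrow> (\<And>i. i \<in> I \<Longrightarrow> f i \<in> square_integrable M) \<Longrightarrow> (\<lambda>x. \<Sum>i\<in>I. f i x) \<in> square_integrable M"
proof (induction I rule: finite_induct)
  case empty
  then show ?case using square_integrable_const[of 0] by simp
next
  case (insert i I)
  then show ?case
    using square_integrable_lincomb[of "f i" M "\<lambda>x. \<Sum>i\<in>I. f i x" 1 1] by simp
qed

lemma square_integrable_piecewise_constant:
  assumes "finite I" "\<forall>i\<in>I. u i \<in> borel_measurable M" "\<forall>x\<in>space M. \<forall>i\<in>I. u i x \<in> {0, 1}"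
  shows "(\<lambda>x. \<Sum>i\<in>I. c i * u i x) \<in> square_integrable M"
  using assms by (intro square_integrable_sum square_integrable_mult_left square_integrable_zero_one) auto

lemma segmentation_fidelity_eq_sqdist:
  assumes "finite I" and u: "\<forall>i\<in>I. u i \<in> borel_measurable M"
    and zero_one: "\<forall>x\<in>space M. \<forall>i\<in>I. u i x \<in> {0, 1}"
    and sum_one: "\<forall>x\<in>space M. (\<Sum>i\<in>I. u i x) = 1"
    and h: "h \<in> square_integrable M"
  shows "(\<Sum>i\<in>I. \<integral>x. (h x - c i)\<^sup>2 * u i x \<partial>M) = sqdist M h (\<lambda>x. \<Sum>i\<in>I. c i * u i x)"
proof -
  have "integrable M (\<lambda>x. (h x - c i)\<^sup>2 * u i x)" if "i \<in> I" for i
  proof (rule Bochner_Integration.integrable_bound[of _ "\<lambda>x. (h x - c i)\<^sup>2"])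
    show "integrable M (\<lambda>x. (h x - c i)\<^sup>2)"
      using h square_integrable_const by (rule integrable_sqdist)
    have [measurable]: "u i \<in> borel_measurable M"
      using u that by blast
    show "(\<lambda>x. (h x - c i)\<^sup>2 * u i x) \<in> borel_measurable M"
      using h by measurable
    show "AE x in M. norm ((h x - c i)\<^sup>2 * u i x) \<le> norm ((h x - c i)\<^sup>2)"
    proof (rule AE_I2)
      fix x assume "x \<in> space M"
      then have "u i x = 0 \<or> u i x = 1"
        using zero_one that by blast
      then show "norm ((h x - c i)\<^sup>2 * u i x) \<le> norm ((h x - c i)\<^sup>2)"
        by auto
    qed
  qed
  then have "(\<Sum>i\<in>I. \<integral>x. (h x - c i)\<^sup>2 * u i x \<partial>M) = (\<integral>x. (\<Sum>i\<in>I. (h x - c i)\<^sup>2 * u i x) \<partial>M)"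
    by (simp add: Bochner_Integration.integral_sum)
  also have "\<dots> = sqdist M h (\<lambda>x. \<Sum>i\<in>I. c i * u i x)"
  proof (rule Bochner_Integration.integral_cong)
    fix x assume "x \<in> space M"
    then obtain j where "\<And>w :: _ \<Rightarrow> real. (\<Sum>i\<in>I. w i * u i x) = w j"
      using sum_zero_one_partition[OF \<open>finite I\<close>] zero_one sum_one by metis
    then show "(\<Sum>i\<in>I. (h x - c i)\<^sup>2 * u i x) = (h x - (\<Sum>i\<in>I. c i * u i x))\<^sup>2"
      by simp
  qed simp
  finally show ?thesis .
qed

end

lemma TV_nonneg: "0 \<le> TV \<Omega> v"
proof -
  have zero_field: "((\<lambda>x. 0), (\<lambda>x v. 0)) \<in> test_fields \<Omega>"
    unfolding test_fields_def by (auto intro!: exI[of _ "{}"])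
  have "div_field (\<lambda>x v. 0) = (\<lambda>x. 0)"
    by (simp add: div_field_def fun_eq_iff)
  then show ?thesis
    using SUP_upper[OF zero_field, of "\<lambda>p. ereal (\<integral>x. v x * div_field (snd p) x \<partial>lebesgue_on \<Omega>)"]
    by (simp add: TV_def zero_ereal_def)
qed

lemma sum_TV_finite:
  assumes "\<forall>i\<in>I. TV \<Omega> (u i) < \<infinity>"
  obtains T where "(\<Sum>i\<in>I. TV \<Omega> (u i)) = ereal T"
proof -
  have "(\<Sum>i\<in>I. TV \<Omega> (u i)) \<noteq> \<infinity>" "0 \<le> (\<Sum>i\<in>I. TV \<Omega> (u i))"
    using assms by (auto simp: sum_Pinfty intro: sum_nonneg TV_nonneg)
  then show ?thesis
    using that by (cases "\<Sum>i\<in>I. TV \<Omega> (u i)") auto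
qed

lemma L2_eq_square_integrable: "L2 \<Omega> = square_integrable (lebesgue_on \<Omega>)"
  by (simp add: L2_def square_integrable_def)

lemma finite_measure_lebesgue_on_bounded_open:
  "bounded \<Omega> \<Longrightarrow> open \<Omega> \<Longrightarrow> finite_measure (lebesgue_on \<Omega>)"
  by (intro finite_measure_lebesgue_on lmeasurable_open)

lemma penalized_convex_functional_lebesgue_on:
  assumes "bounded \<Omega>" "open \<Omega>" and "\<mu> > 0" "lam > 0" and "z \<in> L2 \<Omega>"
    and convex: "convex_on_L2 \<Omega> F" and continuous: "continuous_on_L2 \<Omega> F"
  shows "penalized_convex_functional (lebesgue_on \<Omega>) (\<lambda>g. \<mu> * F g) z lam"
proof -
  interpret finite_measure "lebesgue_on \<Omega>"
    using assms(1,2) by (rule finite_measure_lebesgue_on_bounded_open)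
  show ?thesis
  proof
    fix g h and t :: real
    assume "g \<in> square_integrable (lebesgue_on \<Omega>)" "h \<in> square_integrable (lebesgue_on \<Omega>)" "0 \<le> t" "t \<le> 1"
    then have "F (\<lambda>x. t * g x + (1 - t) * h x) \<le> t * F g + (1 - t) * F h"
      using convex by (simp add: convex_on_L2_def L2_eq_square_integrable)
    then have "\<mu> * F (\<lambda>x. t * g x + (1 - t) * h x) \<le> \<mu> * (t * F g + (1 - t) * F h)"
      using \<open>\<mu> > 0\<close> by (intro mult_left_mono) auto
    then show "\<mu> * F (\<lambda>x. t * g x + (1 - t) * h x) \<le> t * (\<mu> * F g) + (1 - t) * (\<mu> * F h)"
      by (simp add: algebra_simps)
  next
    fix g gs
    assume "g \<in> square_integrable (lebesgue_on \<Omega>)" "\<And>n. gs n \<in> square_integrable (lebesgue_on \<Omega>)"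
      "(\<lambda>n. sqdist (lebesgue_on \<Omega>) (gs n) g) \<longlonglongrightarrow> 0"
    then show "(\<lambda>n. \<mu> * F (gs n)) \<longlonglongrightarrow> \<mu> * F g"
      using continuous
      by (intro tendsto_mult_left) (auto simp: continuous_on_L2_def L2_dist_sq_def L2_eq_square_integrable)
  qed (use assms(4,5) in \<open>auto simp: L2_eq_square_integrable\<close>)
qed

theorem theorem1:
  fixes \<Omega> :: "R2 set" and f :: "R2 \<Rightarrow> real"
    and A :: "(R2 \<Rightarrow> real) \<Rightarrow> (R2 \<Rightarrow> real)"
    and \<Phi> :: "(R2 \<Rightarrow> real) \<Rightarrow> (R2 \<Rightarrow> real) \<Rightarrow> real"
    and \<mu> lam :: real and K :: nat
    and u :: "nat \<Rightarrow> R2 \<Rightarrow> real" and c :: "nat \<Rightarrow> real"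
  assumes "bounded \<Omega>" and "open \<Omega>" and "connected \<Omega>"
    and "\<forall>x\<in>\<Omega>. f x \<in> {0..1}"
    and "linear_on_L2 \<Omega> A"
    and "\<mu> > 0" and "lam > 0" and "K \<ge> 1"
    and "\<forall>x\<in>\<Omega>. (\<Sum>i=1..K. u i x) = 1"
    and "\<forall>x\<in>\<Omega>. \<forall>i\<in>{1..K}. u i x \<in> {0, 1}"
    and "\<forall>i\<in>{1..K}. u i \<in> borel_measurable (lebesgue_on \<Omega>)"
    and "\<forall>i\<in>{1..K}. TV \<Omega> (u i) < \<infinity>"
    and "convex_on_L2 \<Omega> (\<lambda>g. \<Phi> f (A g))"
    and "continuous_on_L2 \<Omega> (\<lambda>g. \<Phi> f (A g))"
  shows "\<exists>g\<in>L2 \<Omega>.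
           (\<forall>h\<in>L2 \<Omega>. energy \<Omega> \<mu> lam K \<Phi> f A u c g \<le> energy \<Omega> \<mu> lam K \<Phi> f A u c h) \<and>
           (\<forall>g'\<in>L2 \<Omega>. (\<forall>h\<in>L2 \<Omega>. energy \<Omega> \<mu> lam K \<Phi> f A u c g' \<le> energy \<Omega> \<mu> lam K \<Phi> f A u c h)
              \<longrightarrow> (AE x in lebesgue_on \<Omega>. g' x = g x))"
proof -
  let ?M = "lebesgue_on \<Omega>"
  interpret finite_measure ?M
    using assms(1,2) by (rule finite_measure_lebesgue_on_bounded_open)
  define z where "z x = (\<Sum>i=1..K. c i * u i x)" for x
  have "z \<in> L2 \<Omega>"
    unfolding z_def L2_eq_square_integrable using assms(10,11)
    by (intro square_integrable_piecewise_constant) auto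
  interpret penalized_convex_functional ?M "\<lambda>g. \<mu> * \<Phi> f (A g)" z lam
    using assms(1,2,6,7) \<open>z \<in> L2 \<Omega>\<close> assms(13,14) by (rule penalized_convex_functional_lebesgue_on)
  obtain T where T: "(\<Sum>i=1..K. TV \<Omega> (u i)) = ereal T"
    using sum_TV_finite assms(12) by blast
  have energy_eq: "energy \<Omega> \<mu> lam K \<Phi> f A u c h = ereal (J h) + ereal T"
    if "h \<in> square_integrable ?M" for h
    unfolding energy_def J_def z_def T
    using segmentation_fidelity_eq_sqdist[of "{1..K}" u h c] assms(9,10,11) that by simp
  obtain g where g: "g \<in> square_integrable ?M" "\<And>h. h \<in> square_integrable ?M \<Longrightarrow> J g \<le> J h"
    using J_has_minimizer by blast
  show ?thesis
    unfolding L2_eq_square_integrable using g J_minimizer_unique[OF g]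
    by (intro bexI[of _ g]) (auto simp: energy_eq)
qed

end
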